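(* Let $\mathcal{S}$ be the stabilizer group of an $[[n,1,3]]$ stabilizer code on $n$ qubits. Let $g \in \mathcal{S}$ be a stabilizer generator of weight $w_g > 3$, written as $g = P_{a_1} P_{a_2} \cdots P_{a_{w_g}}$, where $a_1, \dots, a_{w_g}$ are the distinct qubits on which $g$ acts nontrivially, listed in the order in which the ancilla-controlled gates $\mathrm{C}\text{-}P_{a_1}, \dots, \mathrm{C}\text{-}P_{a_{w_g}}$ are applied during bare-ancilla syndrome extraction, and each $P_{a_i} \in \{X, Y, Z\}$ acts on qubit $a_i$. For $1 \le i \le w_g$ let $\rho_g(a_i) = \prod_{j \ge i} P_{a_j}$ (the hook error on the data qubits caused by a single Pauli error on the ancilla immediately before the gate $\mathrm{C}\text{-}P_{a_i}$), and let $$\mathcal{U}_g = \{\rho_g(a_i) : 1\le i\le w_g,\ w(\rho_g(a_i)) > 1 \text{ and } w(\rho_g(a_i)\, s) > 1 \text{ for all } s \in \mathcal{S}\}.$$ Then $|\mathcal{U}_g| \le w_g - 3$.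
   Context: For a Pauli operator $E$ on $n$ qubits, $w(E)$ denotes its weight, i.e. the number of qubits on which $E$ acts nontrivially (global phases are ignored). The weight $w_g$ of a generator $g$ is its weight in this sense. Bare-ancilla syndrome extraction of $g$: a single ancilla is prepared in $|+\rangle$, the ancilla-controlled gates $\mathrm{C}\text{-}P_{a_1}, \dots, \mathrm{C}\text{-}P_{a_{w_g}}$ targeting the data qubits $a_1,\dots,a_{w_g}$ are applied in this order, and the ancilla is measured in the $X$ basis. Elements of $\mathcal{U}_g$ are called uncorrectable hook errors. *)

theory Defs
  imports Main
begin

text \<open>Single-qubit Pauli operators, global phases ignored.\<close>
datatype pauli = PI | PX | PY | PZ

fun pmult :: "pauli \<Rightarrow> pauli \<Rightarrow> pauli" where
  "pmult PI q = q"
| "pmult p PI = p"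
| "pmult PX PX = PI" | "pmult PY PY = PI" | "pmult PZ PZ = PI"
| "pmult PX PY = PZ" | "pmult PY PX = PZ"
| "pmult PY PZ = PX" | "pmult PZ PY = PX"
| "pmult PZ PX = PY" | "pmult PX PZ = PY"

text \<open>An n-qubit Pauli operator (phase ignored): a map from qubit indices to single-qubit
  Paulis; on n qubits it acts trivially outside {0..<n}.\<close>
type_synonym pauli_op = "nat \<Rightarrow> pauli"

definition on_qubits :: "nat \<Rightarrow> pauli_op \<Rightarrow> bool" where
  "on_qubits n E \<longleftrightarrow> (\<forall>q. n \<le> q \<longrightarrow> E q = PI)"

definition supp :: "pauli_op \<Rightarrow> nat set" where
  "supp E = {q. E q \<noteq> PI}"

definition weight :: "pauli_op \<Rightarrow> nat" where
  "weight E = card (supp E)"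

definition opmult :: "pauli_op \<Rightarrow> pauli_op \<Rightarrow> pauli_op" where
  "opmult E F = (\<lambda>q. pmult (E q) (F q))"

definition ident :: pauli_op where
  "ident = (\<lambda>q. PI)"

text \<open>Two Pauli operators on n qubits commute iff they anticommute on an even number of qubits.\<close>
definition commute :: "nat \<Rightarrow> pauli_op \<Rightarrow> pauli_op \<Rightarrow> bool" where
  "commute n E F \<longleftrightarrow>
     even (card {q. q < n \<and> E q \<noteq> PI \<and> F q \<noteq> PI \<and> E q \<noteq> F q})"

text \<open>Stabilizer group of an [[n,k]] stabilizer code (phases ignored): an abelian subgroup of
  the n-qubit Pauli group with n-k independent generators, i.e. of order 2^(n-k).\<close>
definition stabilizer_group :: "nat \<Rightarrow> nat \<Rightarrow> pauli_op set \<Rightarrow> bool" where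
  "stabilizer_group n k S \<longleftrightarrow>
     k \<le> n \<and>
     (\<forall>s\<in>S. on_qubits n s) \<and> ident \<in> S \<and>
     (\<forall>s\<in>S. \<forall>t\<in>S. opmult s t \<in> S) \<and>
     (\<forall>s\<in>S. \<forall>t\<in>S. commute n s t) \<and>
     finite S \<and> card S = 2 ^ (n - k)"

text \<open>Normalizer (= centralizer, phases ignored) of S in the n-qubit Pauli group.\<close>
definition normalizer :: "nat \<Rightarrow> pauli_op set \<Rightarrow> pauli_op set" where
  "normalizer n S = {E. on_qubits n E \<and> (\<forall>s\<in>S. commute n E s)}"

definition has_distance :: "nat \<Rightarrow> pauli_op set \<Rightarrow> nat \<Rightarrow> bool" where
  "has_distance n S d \<longleftrightarrow>
     (\<exists>E\<in>normalizer n S - S. weight E = d) \<and>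
     (\<forall>E\<in>normalizer n S - S. d \<le> weight E)"

definition stabilizer_code :: "nat \<Rightarrow> nat \<Rightarrow> nat \<Rightarrow> pauli_op set \<Rightarrow> bool" where
  "stabilizer_code n k d S \<longleftrightarrow> stabilizer_group n k S \<and> has_distance n S d"

text \<open>Hook error rho_g(a_i) (0-indexed i): the product of the P_{a_j} for j \<ge> i, where the
  list a gives the support qubits of g in the order the controlled gates are applied.\<close>
definition hook :: "pauli_op \<Rightarrow> nat list \<Rightarrow> nat \<Rightarrow> pauli_op" where
  "hook g a i = (\<lambda>q. if q \<in> set (drop i a) then g q else PI)"

definition uncorrectable_hooks :: "pauli_op set \<Rightarrow> pauli_op \<Rightarrow> nat list \<Rightarrow> pauli_op set" where
  "uncorrectable_hooks S g a =
     {hook g a i | i. i < length a \<and> 1 < weight (hook g a i) \<and>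
                      (\<forall>s\<in>S. 1 < weight (opmult (hook g a i) s))}"

end

theory Submission
  imports Defs
begin

text \<open>Of the w hook errors of g, three are always correctable: rho(a_1) = g is itself a
  stabilizer, rho(a_2) g = P_(a_1) has weight one, and rho(a_w) = P_(a_w) has weight one.
  Hence at most the w - 3 hooks in between can be uncorrectable.\<close>

lemma pmult_self [simp]: "pmult p p = PI"
  by (cases p) auto

lemma supp_hook:
  assumes "set a \<subseteq> supp g"
  shows "supp (hook g a i) = set (drop i a)"
  using assms set_drop_subset[of i a] by (auto simp: supp_def hook_def)

lemma weight_hook:
  assumes "distinct a" and "set a \<subseteq> supp g"
  shows "weight (hook g a i) = length a - i"
  using assms by (simp add: weight_def supp_hook distinct_card)

lemma supp_hook_mult_generator:
  assumes "distinct a" and "set a = supp g"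
  shows "supp (opmult (hook g a i) g) = set (take i a)"
proof -
  have split: "set a = set (take i a) \<union> set (drop i a)"
    by (metis append_take_drop_id set_append)
  have "set (take i a) \<inter> set (drop i a) = {}"
    using assms(1) set_take_disj_set_drop_if_distinct by fastforce
  then show ?thesis
    using assms(2) split by (auto simp: supp_def opmult_def hook_def)
qed

lemma weight_hook_mult_generator:
  assumes "distinct a" and "set a = supp g"
  shows "weight (opmult (hook g a i) g) = min i (length a)"
  using assms by (simp add: weight_def supp_hook_mult_generator distinct_card)

lemma uncorrectable_hooks_subset:
  assumes "g \<in> S" and "distinct a" and "set a = supp g"
  shows "uncorrectable_hooks S g a \<subseteq> hook g a ` {2..<length a - 1}"
proof
  fix E assume "E \<in> uncorrectable_hooks S g a"
  then obtain i where E: "E = hook g a i"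
    and heavy: "1 < weight (hook g a i)"
    and heavy_coset: "\<forall>s\<in>S. 1 < weight (opmult (hook g a i) s)"
    unfolding uncorrectable_hooks_def by blast
  have "1 < min i (length a)"
    using heavy_coset assms by (metis weight_hook_mult_generator)
  moreover have "i < length a - 1"
    using heavy assms by (simp add: weight_hook)
  ultimately show "E \<in> hook g a ` {2..<length a - 1}"
    using E by auto
qed

theorem lemma1:
  fixes n :: nat and S :: "pauli_op set" and g :: pauli_op and a :: "nat list"
  assumes "stabilizer_code n 1 3 S"
    and "g \<in> S"
    and "distinct a"
    and "set a = supp g"
    and "3 < length a"
  shows "card (uncorrectable_hooks S g a) \<le> length a - 3"
proof -
  have "card (uncorrectable_hooks S g a) \<le> card (hook g a ` {2..<length a - 1})"
    using assms(2-4) by (intro card_mono uncorrectable_hooks_subset) simp_all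
  also have "\<dots> \<le> card {2..<length a - 1}"
    by (rule card_image_le) simp
  finally show ?thesis
    by simp
qed

end
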